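(* Let $k$ be a field and let $A$ be a just infinite $k$-algebra that does not satisfy a polynomial identity and is not simple. Then the center $Z(A)$ is a field which is a finite dimensional extension of $k$.
   Context: All rings are associative unital algebras over a field. A $k$-algebra $A$ is called just infinite if $\dim_k(A)=\infty$ and every nonzero two-sided ideal of $A$ has finite codimension in $A$. *)

theory Defs
  imports Complex_Main
begin

definition k_algebra :: "('k::field \<Rightarrow> 'a::ring_1 \<Rightarrow> 'a) \<Rightarrow> bool" where
  "k_algebra smul \<longleftrightarrow> vector_space smul \<and>
     (\<forall>c x y. smul c (x * y) = smul c x * y \<and> smul c (x * y) = x * smul c y)"

definition fin_dim :: "('k::field \<Rightarrow> 'a::ring_1 \<Rightarrow> 'a) \<Rightarrow> 'a set \<Rightarrow> bool" where
  "fin_dim smul V \<longleftrightarrow> (\<exists>S. finite S \<and> S \<subseteq> V \<and> module.span smul S = V)"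

definition two_sided_ideal :: "'a::ring_1 set \<Rightarrow> bool" where
  "two_sided_ideal I \<longleftrightarrow> 0 \<in> I \<and> (\<forall>x\<in>I. \<forall>y\<in>I. x + y \<in> I) \<and>
     (\<forall>x\<in>I. \<forall>a. a * x \<in> I \<and> x * a \<in> I)"

text \<open>Finite codimension of a subspace I: A / I finite dimensional, i.e.
  A is spanned by I together with finitely many elements.\<close>
definition fin_codim :: "('k::field \<Rightarrow> 'a::ring_1 \<Rightarrow> 'a) \<Rightarrow> 'a set \<Rightarrow> bool" where
  "fin_codim smul I \<longleftrightarrow> (\<exists>S. finite S \<and> module.span smul (S \<union> I) = UNIV)"

definition just_infinite :: "('k::field \<Rightarrow> 'a::ring_1 \<Rightarrow> 'a) \<Rightarrow> bool" where
  "just_infinite smul \<longleftrightarrow> \<not> fin_dim smul (UNIV :: 'a set) \<and>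
     (\<forall>I. two_sided_ideal I \<and> I \<noteq> {0} \<longrightarrow> fin_codim smul I)"

definition simple_algebra :: "'a::ring_1 itself \<Rightarrow> bool" where
  "simple_algebra _ \<longleftrightarrow> (0::'a) \<noteq> 1 \<and>
     (\<forall>I::'a set. two_sided_ideal I \<longrightarrow> I = {0} \<or> I = UNIV)"

text \<open>Noncommutative polynomials in variables x_0, x_1, ... over k: finitely supported
  coefficient functions on words (lists of variable indices). Evaluation at a : nat => 'a.\<close>
definition nc_eval :: "('k::field \<Rightarrow> 'a::ring_1 \<Rightarrow> 'a) \<Rightarrow> (nat list \<Rightarrow> 'k) \<Rightarrow> (nat \<Rightarrow> 'a) \<Rightarrow> 'a" where
  "nc_eval smul f a = (\<Sum>w\<in>{w. f w \<noteq> 0}. smul (f w) (prod_list (map a w)))"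

definition satisfies_PI :: "('k::field \<Rightarrow> 'a::ring_1 \<Rightarrow> 'a) \<Rightarrow> bool" where
  "satisfies_PI smul \<longleftrightarrow> (\<exists>f :: nat list \<Rightarrow> 'k. finite {w. f w \<noteq> 0} \<and> f \<noteq> (\<lambda>_. 0) \<and>
     (\<forall>a. nc_eval smul f a = 0))"

definition center :: "'a::ring_1 set" where
  "center = {z. \<forall>a. z * a = a * z}"

end

theory Submission
  imports Defs "HOL-Combinatorics.Permutations"
begin

text \<open>
  A nonzero central element z is regular: otherwise its annihilator and zA would both be
  nonzero ideals, hence of finite codimension, and A would be finite dimensional. Next, A/zA is
  spanned over the centre by a finite set S, hence so is every A/z^nA, and the standard
  polynomial of degree |S| + 1 vanishes modulo every z^nA. As A is not PI, the intersection K of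
  the ideals z^nA is nonzero, so of finite codimension. Then some nonzero polynomial in z lies
  in K, and cancelling its lowest power of z shows that z is a unit. Finally, Z(A) meets a
  proper nonzero ideal I trivially, so it embeds into the finite dimensional A/I.
\<close>

lemma center_commute: "z \<in> center \<Longrightarrow> z * x = x * (z::'a::ring_1)"
  by (simp add: center_def)

lemma center_0: "0 \<in> (center :: 'a::ring_1 set)"
  and center_1: "1 \<in> (center :: 'a::ring_1 set)"
  by (simp_all add: center_def)

lemma center_add: "x \<in> center \<Longrightarrow> y \<in> center \<Longrightarrow> x + y \<in> (center :: 'a::ring_1 set)"
  by (simp add: center_def distrib_left distrib_right)

lemma center_mult:
  assumes "x \<in> center" "y \<in> center"
  shows "x * y \<in> (center :: 'a::ring_1 set)"
proof -
  have "x * y * a = a * (x * y)" for a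
  proof -
    have "x * y * a = x * (a * y)" using center_commute[OF assms(2), of a] by (simp add: mult.assoc)
    also have "\<dots> = a * (x * y)" using center_commute[OF assms(1), of a] by (simp add: mult.assoc[symmetric])
    finally show ?thesis .
  qed
  then show ?thesis by (simp add: center_def)
qed

lemma center_power: "x \<in> center \<Longrightarrow> x ^ n \<in> (center :: 'a::ring_1 set)"
  by (induction n) (auto intro: center_mult center_1)

lemma center_right_inverse:
  assumes z: "z \<in> center" and zw: "z * w = 1"
  shows "w \<in> (center :: 'a::ring_1 set)"
proof -
  have wz: "w * z = 1" using center_commute[OF z, of w] zw by simp
  have "w * a = a * w" for a
  proof -
    have "w * a = w * a * (z * w)" using zw by simp
    also have "\<dots> = w * (z * a) * w" using center_commute[OF z, of a] by (simp add: mult.assoc)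
    also have "\<dots> = a * w" using wz by (simp add: mult.assoc[symmetric])
    finally show ?thesis .
  qed
  then show ?thesis by (simp add: center_def)
qed

lemma
  assumes "two_sided_ideal I"
  shows two_sided_ideal_0: "0 \<in> I"
    and two_sided_ideal_add: "x \<in> I \<Longrightarrow> y \<in> I \<Longrightarrow> x + y \<in> I"
    and two_sided_ideal_mult_left: "x \<in> I \<Longrightarrow> a * x \<in> I"
    and two_sided_ideal_mult_right: "x \<in> I \<Longrightarrow> x * a \<in> I"
  using assms by (simp_all add: two_sided_ideal_def)

lemma two_sided_ideal_sum:
  "two_sided_ideal I \<Longrightarrow> (\<And>x. x \<in> A \<Longrightarrow> f x \<in> I) \<Longrightarrow> sum f A \<in> I"
  by (induction A rule: infinite_finite_induct) (auto intro: two_sided_ideal_0 two_sided_ideal_add)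

lemma two_sided_ideal_UNIV_iff_one: "two_sided_ideal I \<Longrightarrow> I = UNIV \<longleftrightarrow> 1 \<in> I"
  using two_sided_ideal_mult_left[of I 1] by auto

lemma two_sided_ideal_INT:
  "(\<And>n. two_sided_ideal (J n)) \<Longrightarrow> two_sided_ideal (\<Inter>n. J n)"
  by (simp add: two_sided_ideal_def)

lemma two_sided_ideal_range_mult:
  assumes "z \<in> center"
  shows "two_sided_ideal (range (\<lambda>b. z * (b::'a::ring_1)))"
  unfolding two_sided_ideal_def
proof (intro conjI ballI allI)
  show "0 \<in> range ((*) z)" by (rule range_eqI[of _ _ 0]) simp
  fix x a assume "x \<in> range ((*) z)"
  then obtain y where y: "x = z * y" by blast
  have "a * x = z * (a * y)"
    using center_commute[OF assms, of a] y by (simp add: mult.assoc[symmetric])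
  then show "a * x \<in> range ((*) z)" by blast
  have "x * a = z * (y * a)" using y by (simp add: mult.assoc)
  then show "x * a \<in> range ((*) z)" by blast
next
  show "x + y \<in> range ((*) z)" if "x \<in> range ((*) z)" "y \<in> range ((*) z)" for x y
    using that by (auto simp: distrib_left[symmetric])
qed

lemma two_sided_ideal_annihilator:
  assumes "z \<in> center"
  shows "two_sided_ideal {y. z * y = (0::'a::ring_1)}"
  unfolding two_sided_ideal_def
proof (intro conjI ballI allI)
  fix x a assume x: "x \<in> {y. z * y = 0}"
  have "z * (a * x) = a * (z * x)"
    using center_commute[OF assms, of a] by (simp add: mult.assoc[symmetric])
  then show "a * x \<in> {y. z * y = 0}" using x by simp
  show "x * a \<in> {y. z * y = 0}" using x by (simp add: mult.assoc[symmetric])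
qed (auto simp: distrib_left)

lemma mult_power_eq_0_imp_eq_0:
  fixes z :: "'a::ring_1"
  assumes "\<And>y. z * y = 0 \<Longrightarrow> y = 0" and "z ^ n * y = 0"
  shows "y = 0"
  using assms(2)
proof (induction n arbitrary: y)
  case (Suc n)
  then have "z * (z ^ n * y) = 0" by (simp add: mult.assoc)
  then show ?case using Suc.IH assms(1) by blast
qed simp

definition perm_words :: "nat \<Rightarrow> nat list set" where
  "perm_words m = {w. distinct w \<and> set w = {0..<m}}"

definition word_perm :: "nat list \<Rightarrow> nat \<Rightarrow> nat" where
  "word_perm w i = (if i < length w then w ! i else i)"

definition word_sign :: "nat list \<Rightarrow> int" where
  "word_sign w = sign (word_perm w)"

definition standard_poly :: "nat \<Rightarrow> (nat \<Rightarrow> 'a::ring_1) \<Rightarrow> 'a" where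
  "standard_poly m a = (\<Sum>w\<in>perm_words m. of_int (word_sign w) * prod_list (map a w))"

lemma length_perm_words: "w \<in> perm_words m \<Longrightarrow> length w = m"
  unfolding perm_words_def using distinct_card by fastforce

lemma finite_perm_words: "finite (perm_words m)"
proof -
  have "perm_words m \<subseteq> {w. set w \<subseteq> {0..<m} \<and> length w = m}"
    using length_perm_words by (auto simp: perm_words_def)
  then show ?thesis using finite_lists_length_eq[OF finite_atLeastLessThan] finite_subset by blast
qed

lemma word_perm_permutes:
  assumes "w \<in> perm_words m"
  shows "word_perm w permutes {0..<m}"
proof (rule bij_imp_permutes)
  have len: "length w = m" using length_perm_words assms by auto
  have "bij_betw ((!) w) {..<m} {0..<m}"
    using assms len by (intro bij_betw_nth) (auto simp: perm_words_def)
  moreover have "bij_betw (word_perm w) {0..<m} {0..<m} \<longleftrightarrow> bij_betw ((!) w) {0..<m} {0..<m}"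
    by (rule bij_betw_cong) (auto simp: word_perm_def len)
  ultimately show "bij_betw (word_perm w) {0..<m} {0..<m}" by (simp add: atLeast0LessThan)
  show "i \<notin> {0..<m} \<Longrightarrow> word_perm w i = i" for i using len by (auto simp: word_perm_def)
qed

lemma word_sign_cases: "word_sign w = 1 \<or> word_sign w = -1"
  unfolding word_sign_def by (cases "word_perm w" rule: sign_cases) auto

lemma word_sign_upt: "word_sign [0..<m] = 1"
proof -
  have "word_perm [0..<m] = id" by (auto simp: word_perm_def fun_eq_iff)
  then show ?thesis by (simp add: word_sign_def)
qed

lemma map_transpose_perm_words:
  assumes "w \<in> perm_words m" "i < m" "j < m"
  shows "map (transpose i j) w \<in> perm_words m"
  using assms by (simp add: perm_words_def distinct_map transpose_image_eq)

lemma word_sign_map_transpose: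
  assumes w: "w \<in> perm_words m" and "i < m" "j < m" "i \<noteq> j"
  shows "word_sign (map (transpose i j) w) = - word_sign w"
proof -
  have "word_perm (map (transpose i j) w) = transpose i j \<circ> word_perm w"
    using assms length_perm_words[OF w] by (auto simp: word_perm_def fun_eq_iff)
  moreover have "permutation (word_perm w)"
    using permutes_imp_permutation[OF _ word_perm_permutes[OF w]] by simp
  ultimately show ?thesis
    using assms by (simp add: word_sign_def sign_compose permutation_swap_id sign_swap_id)
qed

text \<open>Swapping i and j matches the even words with the odd ones; merely showing
  that the value equals its negative would not suffice in characteristic 2.\<close>
lemma standard_poly_eq_0:
  fixes a :: "nat \<Rightarrow> 'a::ring_1"
  assumes "i < m" "j < m" "i \<noteq> j" "a i = a j"
  shows "standard_poly m a = 0"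
proof -
  let ?t = "map (transpose i j)"
  let ?P = "\<lambda>w. prod_list (map a w)"
  define Wp where "Wp = {w\<in>perm_words m. word_sign w = 1}"
  define Wn where "Wn = {w\<in>perm_words m. word_sign w = -1}"
  have a_t: "a \<circ> transpose i j = a" using assms(4) by (auto simp: transpose_def fun_eq_iff)
  have bij: "bij_betw ?t Wp Wn"
  proof (rule bij_betw_byWitness[where f'="?t"])
    show "\<forall>w\<in>Wp. ?t (?t w) = w" "\<forall>w\<in>Wn. ?t (?t w) = w" by (simp_all add: map_map comp_def)
    show "?t ` Wp \<subseteq> Wn" using assms map_transpose_perm_words word_sign_map_transpose
      by (auto simp: Wp_def Wn_def)
    show "?t ` Wn \<subseteq> Wp" using assms map_transpose_perm_words word_sign_map_transpose
      by (fastforce simp: Wp_def Wn_def)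
  qed
  have split: "perm_words m = Wp \<union> Wn" "Wp \<inter> Wn = {}"
    using word_sign_cases by (auto simp: Wp_def Wn_def)
  have fin: "finite Wp" "finite Wn" using finite_perm_words by (auto simp: Wp_def Wn_def)
  have "standard_poly m a
      = (\<Sum>w\<in>Wp. of_int (word_sign w) * ?P w) + (\<Sum>w\<in>Wn. of_int (word_sign w) * ?P w)"
    unfolding standard_poly_def split(1) by (rule sum.union_disjoint[OF fin split(2)])
  also have "\<dots> = (\<Sum>w\<in>Wp. ?P w) - (\<Sum>w\<in>Wn. ?P w)"
    by (simp add: Wp_def Wn_def sum_negf)
  also have "(\<Sum>w\<in>Wn. ?P w) = (\<Sum>w\<in>Wp. ?P (?t w))"
    using sum.reindex_bij_betw[OF bij, of ?P] by simp
  finally show ?thesis by (simp add: a_t)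
qed

lemma prod_list_map_update_distinct:
  fixes a :: "nat \<Rightarrow> 'a::monoid_mult"
  assumes "distinct w" "k \<in> set w"
  obtains y z where "\<And>x. prod_list (map (a(k := x)) w) = y * x * z"
proof -
  obtain ys zs where w: "w = ys @ k # zs" using split_list[OF assms(2)] by blast
  have "k \<notin> set ys" "k \<notin> set zs" using assms(1) w by auto
  then have unchanged: "map (a(k := x)) ys = map a ys" "map (a(k := x)) zs = map a zs" for x
    by (auto intro!: map_cong)
  have "prod_list (map (a(k := x)) w) = prod_list (map a ys) * x * prod_list (map a zs)" for x
    by (simp add: w unchanged mult.assoc)
  then show thesis by (rule that)
qed

lemma standard_poly_update_eq_sum:
  fixes a :: "nat \<Rightarrow> 'a::ring_1"
  assumes "k < m"
  obtains Y Z where "\<And>x. standard_poly m (a(k := x)) = (\<Sum>w\<in>perm_words m. Y w * x * Z w)"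
proof -
  have "\<exists>y z. \<forall>x. of_int (word_sign w) * prod_list (map (a(k := x)) w) = y * x * z"
    if "w \<in> perm_words m" for w
  proof -
    have "distinct w" "k \<in> set w" using that assms by (auto simp: perm_words_def)
    then obtain y z where "\<And>x. prod_list (map (a(k := x)) w) = y * x * z"
      using prod_list_map_update_distinct[of w k a] by blast
    then show ?thesis by (intro exI[of _ "of_int (word_sign w) * y"] exI[of _ z]) (simp add: mult.assoc)
  qed
  then obtain Y Z where "\<And>w x. w \<in> perm_words m \<Longrightarrow>
      of_int (word_sign w) * prod_list (map (a(k := x)) w) = Y w * x * Z w"
    by metis
  then show thesis by (intro that) (simp add: standard_poly_def)
qed

lemma standard_poly_update_mem_ideal:
  fixes a :: "nat \<Rightarrow> 'a::ring_1"
  assumes "two_sided_ideal J" "k < m" "x \<in> J"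
  shows "standard_poly m (a(k := x)) \<in> J"
proof -
  obtain Y Z where "\<And>x. standard_poly m (a(k := x)) = (\<Sum>w\<in>perm_words m. Y w * x * Z w)"
    using standard_poly_update_eq_sum[OF assms(2)] by blast
  then show ?thesis
    using assms(1,3) by (simp add: two_sided_ideal_sum two_sided_ideal_mult_left two_sided_ideal_mult_right)
qed

lemma standard_poly_update_central_comb:
  fixes a :: "nat \<Rightarrow> 'a::ring_1"
  assumes "k < m" "\<And>s. c s \<in> center"
  shows "standard_poly m (a(k := (\<Sum>s\<in>S. c s * s) + y))
    = (\<Sum>s\<in>S. c s * standard_poly m (a(k := s))) + standard_poly m (a(k := y))"
proof -
  obtain Y Z where YZ: "\<And>x. standard_poly m (a(k := x)) = (\<Sum>w\<in>perm_words m. Y w * x * Z w)"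
    using standard_poly_update_eq_sum[OF assms(1)] by blast
  have "Y w * (c s * s) * Z w = c s * (Y w * s * Z w)" for w s
    using center_commute[OF assms(2), of s "Y w", symmetric] by (simp add: mult.assoc[symmetric])
  then show ?thesis
    by (simp add: YZ distrib_left distrib_right sum.distrib sum_distrib_left sum_distrib_right
        sum.swap[of _ "perm_words m"])
qed

definition centrally_spans_mod :: "'a::ring_1 set \<Rightarrow> 'a set \<Rightarrow> bool" where
  "centrally_spans_mod S J \<longleftrightarrow>
     (\<forall>x. \<exists>c. (\<forall>s. c s \<in> center) \<and> x - (\<Sum>s\<in>S. c s * s) \<in> J)"

lemma standard_poly_mem_ideal:
  fixes a :: "nat \<Rightarrow> 'a::ring_1"
  assumes J: "two_sided_ideal J" and S: "finite S" "card S < m" "centrally_spans_mod S J"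
  shows "standard_poly m a \<in> J"
proof -
  have base: "standard_poly m a \<in> J" if "\<forall>i<m. a i \<in> S \<union> J" for a :: "nat \<Rightarrow> 'a"
  proof (cases "\<exists>i<m. a i \<in> J")
    case True
    then obtain i where "i < m" "a i \<in> J" by blast
    then show ?thesis using standard_poly_update_mem_ideal[OF J, of i m "a i" a] by simp
  next
    case False
    with that have "a ` {..<m} \<subseteq> S" by auto
    then have "\<not> inj_on a {..<m}" using card_inj_on_le[of a "{..<m}" S] S(1,2) by auto
    then obtain i j where "i < m" "j < m" "i \<noteq> j" "a i = a j" by (auto simp: inj_on_def)
    then show ?thesis using standard_poly_eq_0 two_sided_ideal_0[OF J] by metis
  qed
  txt \<open>By downward induction, the arguments are replaced one at a time by elements of S or J,
    using that the standard polynomial is linear with central coefficients in each argument.\<close>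
  have "standard_poly m a \<in> J" if "\<forall>i. k \<le> i \<and> i < m \<longrightarrow> a i \<in> S \<union> J" "k \<le> m"
    for k and a :: "nat \<Rightarrow> 'a"
    using that
  proof (induction k arbitrary: a)
    case 0
    then show ?case using base by auto
  next
    case (Suc k)
    obtain c where c: "\<And>s. c s \<in> center" and y: "a k - (\<Sum>s\<in>S. c s * s) \<in> J"
      using S(3) by (auto simp: centrally_spans_mod_def)
    have IH: "standard_poly m (a(k := x)) \<in> J" if "x \<in> S \<union> J" for x
    proof (rule Suc.IH)
      show "\<forall>i. k \<le> i \<and> i < m \<longrightarrow> (a(k := x)) i \<in> S \<union> J" using Suc.prems(1) that by auto
    qed (use Suc.prems(2) in simp)
    have "standard_poly m a = standard_poly m (a(k := (\<Sum>s\<in>S. c s * s) + (a k - (\<Sum>s\<in>S. c s * s))))"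
      by simp
    also have "\<dots> = (\<Sum>s\<in>S. c s * standard_poly m (a(k := s)))
        + standard_poly m (a(k := a k - (\<Sum>s\<in>S. c s * s)))"
      using Suc.prems(2) c by (intro standard_poly_update_central_comb) auto
    also have "\<dots> \<in> J"
      using IH y J by (intro two_sided_ideal_add two_sided_ideal_sum two_sided_ideal_mult_left) auto
    finally show ?case .
  qed
  from this[of m a] show ?thesis by force
qed

lemma centrally_spans_mod_power:
  assumes z: "z \<in> center" and S: "centrally_spans_mod S (range ((*) z))"
  shows "centrally_spans_mod S (range ((*) (z ^ n)))"
  unfolding centrally_spans_mod_def
proof
  fix x :: 'a
  show "\<exists>c. (\<forall>s. c s \<in> center) \<and> x - (\<Sum>s\<in>S. c s * s) \<in> range ((*) (z ^ n))"
  proof (induction n)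
    case 0
    show ?case by (intro exI[of _ "\<lambda>_. 0"]) (auto simp: center_0)
  next
    case (Suc n)
    then obtain c b where c: "\<forall>s. c s \<in> center" and b: "x - (\<Sum>s\<in>S. c s * s) = z ^ n * b"
      by auto
    obtain d where d: "\<forall>s. d s \<in> center" and "b - (\<Sum>s\<in>S. d s * s) \<in> range ((*) z)"
      using S unfolding centrally_spans_mod_def by blast
    then obtain b' where b': "b - (\<Sum>s\<in>S. d s * s) = z * b'" by blast
    have "x - (\<Sum>s\<in>S. (c s + z ^ n * d s) * s) = z ^ n * (b - (\<Sum>s\<in>S. d s * s))"
      using b by (simp add: algebra_simps sum.distrib sum_distrib_left)
    also have "\<dots> = z ^ Suc n * b'" by (simp only: b' power_Suc2 mult.assoc)
    finally show ?case
      using c d center_power[OF z]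
      by (intro exI[of _ "\<lambda>s. c s + z ^ n * d s"]) (blast intro: center_add center_mult)
  qed
qed

locale algebra_over_field =
  fixes smul :: "'k::field \<Rightarrow> 'a::ring_1 \<Rightarrow> 'a"
  assumes k_algebra: "k_algebra smul"
begin

sublocale vector_space smul
  using k_algebra by (simp add: k_algebra_def)

lemma smul_mult_left: "smul c (x * y) = smul c x * y"
  and smul_mult_right: "smul c (x * y) = x * smul c y"
  using k_algebra unfolding k_algebra_def by blast+

lemma smul_eq_mult: "smul c x = smul c 1 * x"
  using smul_mult_left[of c 1 x] by simp

lemma smul_one_in_center: "smul c 1 \<in> center"
proof -
  have "smul c 1 * a = a * smul c 1" for a
    using smul_mult_left[of c 1 a] smul_mult_right[of c a 1] by simp
  then show ?thesis by (simp add: center_def)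
qed

lemma subspace_center: "subspace center"
  unfolding subspace_def
  using center_0 center_add center_mult[OF smul_one_in_center] by (metis smul_eq_mult)

lemma subspace_two_sided_ideal: "two_sided_ideal I \<Longrightarrow> subspace I"
  unfolding subspace_def by (metis two_sided_ideal_0 two_sided_ideal_add two_sided_ideal_mult_left smul_eq_mult)

lemma centrally_spans_mod_if_span:
  assumes "subspace I" "finite S" "span (S \<union> I) = UNIV"
  shows "centrally_spans_mod S I"
  unfolding centrally_spans_mod_def
proof
  fix x
  have "x \<in> span (S \<union> I)" using assms(3) by simp
  then obtain u v where "x = u + v" "u \<in> span S" "v \<in> span I"
    unfolding span_Un by blast
  moreover obtain \<beta> where "u = (\<Sum>s\<in>S. smul (\<beta> s) s)"
    using \<open>u \<in> span S\<close> unfolding span_finite[OF assms(2)] by blast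
  ultimately have "x - (\<Sum>s\<in>S. smul (\<beta> s) 1 * s) \<in> I"
    using span_eq_iff[THEN iffD2, OF assms(1)] by (simp flip: smul_eq_mult)
  then show "\<exists>c. (\<forall>s. c s \<in> center) \<and> x - (\<Sum>s\<in>S. c s * s) \<in> I"
    using smul_one_in_center by (intro exI[of _ "\<lambda>s. smul (\<beta> s) 1"]) simp
qed

lemma family_dependent_in_span:
  assumes "finite S" "\<And>i. i < n \<Longrightarrow> v i \<in> span S" "card S < n"
  obtains \<alpha> where "\<exists>i<n. \<alpha> i \<noteq> 0" "(\<Sum>i<n. smul (\<alpha> i) (v i)) = 0"
proof (cases "inj_on v {..<n}")
  case True
  have "\<not> independent (v ` {..<n})"
    using independent_span_bound[OF assms(1), of "v ` {..<n}"] assms(2,3) card_image[OF True]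
    by auto
  then obtain u where u: "\<exists>x\<in>v ` {..<n}. u x \<noteq> 0" "(\<Sum>x\<in>v ` {..<n}. smul (u x) x) = 0"
    using dependent_finite[of "v ` {..<n}"] by auto
  moreover have "(\<Sum>x\<in>v ` {..<n}. smul (u x) x) = (\<Sum>i<n. smul (u (v i)) (v i))"
    by (simp add: sum.reindex[OF True])
  ultimately show thesis by (intro that[of "u \<circ> v"]) auto
next
  case False
  then obtain i j where ij: "i < n" "j < n" "i \<noteq> j" "v i = v j"
    unfolding inj_on_def by blast
  define \<alpha> :: "nat \<Rightarrow> 'k" where "\<alpha> l = (if l = i then 1 else if l = j then -1 else 0)" for l
  have "(\<Sum>l<n. smul (\<alpha> l) (v l)) = (\<Sum>l\<in>{i, j}. smul (\<alpha> l) (v l))"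
    by (rule sum.mono_neutral_right) (auto simp: \<alpha>_def ij)
  also have "\<dots> = 0" using ij by (simp add: \<alpha>_def)
  finally show thesis using ij by (intro that[of \<alpha>]) (auto simp: \<alpha>_def)
qed

lemma family_dependent_mod_subspace:
  assumes "subspace W" "finite S" "span (S \<union> W) = UNIV" "card S < n"
  obtains \<alpha> where "\<exists>i<n. \<alpha> i \<noteq> 0" "(\<Sum>i<n. smul (\<alpha> i) (x i)) \<in> W"
proof -
  have "\<forall>i. \<exists>u. u \<in> span S \<and> x i - u \<in> W"
  proof
    fix i
    have "x i \<in> span (S \<union> W)" using assms(3) by simp
    then obtain u v where "x i = u + v" "u \<in> span S" "v \<in> span W"
      unfolding span_Un by blast
    then show "\<exists>u. u \<in> span S \<and> x i - u \<in> W"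
      using span_eq_iff[THEN iffD2, OF assms(1)] by (intro exI[of _ u]) auto
  qed
  then obtain s where s: "\<And>i. s i \<in> span S" "\<And>i. x i - s i \<in> W"
    by metis
  obtain \<alpha> where \<alpha>: "\<exists>i<n. \<alpha> i \<noteq> 0" "(\<Sum>i<n. smul (\<alpha> i) (s i)) = 0"
    by (rule family_dependent_in_span[OF assms(2) s(1) assms(4)])
  have "(\<Sum>i<n. smul (\<alpha> i) (x i)) = (\<Sum>i<n. smul (\<alpha> i) (x i - s i)) + (\<Sum>i<n. smul (\<alpha> i) (s i))"
    by (simp add: sum.distrib[symmetric] scale_right_diff_distrib)
  also have "\<dots> = (\<Sum>i<n. smul (\<alpha> i) (x i - s i))" using \<alpha>(2) by simp
  also have "\<dots> \<in> W" using assms(1) s(2) by (intro subspace_sum subspace_scale)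
  finally show thesis using \<alpha>(1) by (rule that[rotated])
qed

lemma fin_dim_if_Int_fin_codim_eq_0:
  assumes V: "subspace V" and "subspace W" "fin_codim smul W" and VW: "V \<inter> W \<subseteq> {0}"
  shows "fin_dim smul V"
proof -
  obtain S where W: "subspace W" "finite S" "span (S \<union> W) = UNIV"
    using assms(2,3) by (auto simp: fin_codim_def)
  obtain B where B: "B \<subseteq> V" "independent B" "V \<subseteq> span B"
    by (rule basis_exists)
  have "finite B"
  proof (rule ccontr)
    assume "infinite B"
    then obtain g :: "nat \<Rightarrow> 'a" where g: "inj g" "range g \<subseteq> B"
      using infinite_countable_subset by metis
    obtain \<alpha> where \<alpha>: "\<exists>i<Suc (card S). \<alpha> i \<noteq> 0" "(\<Sum>i<Suc (card S). smul (\<alpha> i) (g i)) \<in> W"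
      by (rule family_dependent_mod_subspace[OF W, of "Suc (card S)" g]) simp_all
    have "(\<Sum>i<Suc (card S). smul (\<alpha> i) (g i)) \<in> V"
      using g B(1) by (intro subspace_sum subspace_scale V) auto
    with \<alpha>(2) VW have "(\<Sum>i<Suc (card S). smul (\<alpha> i) (g i)) = 0" by blast
    then have "(\<Sum>x\<in>g ` {..<Suc (card S)}. smul ((\<alpha> \<circ> inv g) x) x) = 0"
      using g(1) by (simp add: sum.reindex inj_on_subset)
    then have "(\<alpha> \<circ> inv g) (g i) = 0" if "i < Suc (card S)" for i
      using independentD[OF B(2)] g(2) that by blast
    then show False using \<alpha>(1) g(1) by auto
  qed
  moreover have "span B = V" using span_subspace[OF B(1,3) V] .
  ultimately show ?thesis using B(1) by (auto simp: fin_dim_def)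
qed

lemma fin_dim_UNIV_if_fin_dim_fin_codim:
  assumes "fin_codim smul I" "fin_dim smul I"
  shows "fin_dim smul (UNIV :: 'a set)"
proof -
  obtain S T where S: "finite S" "span (S \<union> I) = UNIV" and T: "finite T" "span T = I"
    using assms by (auto simp: fin_codim_def fin_dim_def)
  have "S \<union> I \<subseteq> span (S \<union> T)"
    using T(2) span_mono[of T "S \<union> T"] span_superset[of "S \<union> T"] by auto
  then have "span (S \<union> T) = UNIV"
    using S(2) span_minimal[OF _ subspace_span] by blast
  then show ?thesis using S(1) T(1) by (auto simp: fin_dim_def)
qed

lemma fin_dim_range_mult_if_fin_codim_annihilator:
  assumes "fin_codim smul {y. z * y = 0}"
  shows "fin_dim smul (range ((*) z))"
proof -
  obtain S where S: "finite S" "span (S \<union> {y. z * y = 0}) = UNIV"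
    using assms by (auto simp: fin_codim_def)
  interpret mult_z: module_hom smul smul "(*) z"
    by unfold_locales (simp_all add: distrib_left smul_mult_right)
  have "(*) z ` (S \<union> {y. z * y = 0}) = insert 0 ((*) z ` S)"
    by (auto intro: image_eqI[of 0 _ 0])
  then have "range ((*) z) = span ((*) z ` S)"
    using mult_z.span_image[of "S \<union> {y. z * y = 0}"] S(2) by simp
  then show ?thesis
    using S(1) span_superset by (auto simp: fin_dim_def intro!: exI[of _ "(*) z ` S"])
qed

lemma satisfies_PI_if_standard_poly_eq_0:
  assumes "\<And>a :: nat \<Rightarrow> 'a. standard_poly m a = 0"
  shows "satisfies_PI smul"
proof -
  define f :: "nat list \<Rightarrow> 'k" where "f w = (if w \<in> perm_words m then of_int (word_sign w) else 0)" for w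
  have "of_int (word_sign w) \<noteq> (0::'k)" for w
    using word_sign_cases[of w] by auto
  then have supp: "{w. f w \<noteq> 0} = perm_words m"
    by (auto simp: f_def)
  have "smul (of_int (word_sign w)) v = of_int (word_sign w) * v" for w v
    using word_sign_cases[of w] by (auto simp: scale_minus_left)
  then have "nc_eval smul f a = standard_poly m a" for a
    unfolding nc_eval_def supp standard_poly_def by (intro sum.cong) (auto simp: f_def)
  moreover have "f [0..<m] = 1" by (simp add: f_def perm_words_def word_sign_upt)
  ultimately show ?thesis
    unfolding satisfies_PI_def using finite_perm_words supp assms
    by (intro exI[of _ f]) (auto simp: fun_eq_iff intro!: exI[of _ "[0..<m]"])
qed

lemma zero_neq_one_if_just_infinite:
  assumes "just_infinite smul"
  shows "(0::'a) \<noteq> 1"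
proof
  assume "(0::'a) = 1"
  then have "x = 0" for x :: 'a by (metis mult_1_right mult_zero_right)
  then have "span {} = (UNIV :: 'a set)" by auto
  then have "fin_dim smul (UNIV :: 'a set)" unfolding fin_dim_def by blast
  then show False using assms unfolding just_infinite_def by blast
qed

lemma fin_codim_if_just_infinite:
  "just_infinite smul \<Longrightarrow> two_sided_ideal I \<Longrightarrow> x \<in> I \<Longrightarrow> x \<noteq> 0 \<Longrightarrow> fin_codim smul I"
  unfolding just_infinite_def by blast

lemma mult_central_eq_0_if_just_infinite:
  fixes z b :: 'a
  assumes JI: "just_infinite smul" and z: "z \<in> center" "z \<noteq> 0" and "z * b = 0"
  shows "b = 0"
proof (rule ccontr)
  assume "b \<noteq> 0"
  then have "fin_codim smul {y. z * y = 0}"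
    using assms by (intro fin_codim_if_just_infinite[OF JI two_sided_ideal_annihilator]) auto
  then have "fin_dim smul (range ((*) z))" by (rule fin_dim_range_mult_if_fin_codim_annihilator)
  moreover have "fin_codim smul (range ((*) z))"
    using z by (intro fin_codim_if_just_infinite[OF JI two_sided_ideal_range_mult, of z z])
      (auto intro: range_eqI[of _ _ 1])
  ultimately have "fin_dim smul (UNIV :: 'a set)" by (intro fin_dim_UNIV_if_fin_dim_fin_codim)
  then show False using JI by (simp add: just_infinite_def)
qed

lemma right_invertible_if_poly_mem_power_ideals:
  fixes z :: 'a
  assumes regular: "\<And>y. z * y = 0 \<Longrightarrow> y = 0"
    and \<alpha>: "\<exists>i<N. \<alpha> i \<noteq> 0"
    and mem: "(\<Sum>i<N. smul (\<alpha> i) (z ^ i)) \<in> (\<Inter>n. range ((*) (z ^ n)))"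
  shows "\<exists>w. z * w = 1"
proof -
  txt \<open>With j the least index of a nonzero coefficient, the polynomial is
    z^j (\<alpha> j + z r); it lies in z^(j+1) A, and cancelling z^j leaves \<alpha> j \<in> zA.\<close>
  define j where "j = (LEAST i. i < N \<and> \<alpha> i \<noteq> 0)"
  have j: "j < N" "\<alpha> j \<noteq> 0" using LeastI_ex[OF \<alpha>] by (auto simp: j_def)
  have below: "\<alpha> i = 0" if "i < j" for i
    using not_less_Least[of i "\<lambda>i. i < N \<and> \<alpha> i \<noteq> 0"] that j(1) by (auto simp: j_def)
  define r where "r = (\<Sum>i\<in>{Suc j..<N}. smul (\<alpha> i) (z ^ (i - Suc j)))"
  have "(\<Sum>i<N. smul (\<alpha> i) (z ^ i)) = (\<Sum>i\<in>{j..<N}. smul (\<alpha> i) (z ^ i))"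
    by (rule sum.mono_neutral_right) (auto simp: below)
  also have "\<dots> = smul (\<alpha> j) (z ^ j) + (\<Sum>i\<in>{Suc j..<N}. smul (\<alpha> i) (z ^ i))"
    using j(1) by (simp add: sum.atLeast_Suc_lessThan)
  also have "(\<Sum>i\<in>{Suc j..<N}. smul (\<alpha> i) (z ^ i)) = z ^ Suc j * r"
    unfolding r_def sum_distrib_left
  proof (rule sum.cong[OF refl])
    fix i assume "i \<in> {Suc j..<N}"
    then have "z ^ i = z ^ (Suc j + (i - Suc j))" by simp
    also have "\<dots> = z ^ Suc j * z ^ (i - Suc j)" by (rule power_add)
    finally show "smul (\<alpha> i) (z ^ i) = z ^ Suc j * smul (\<alpha> i) (z ^ (i - Suc j))"
      by (simp add: smul_mult_right)
  qed
  finally have p: "(\<Sum>i<N. smul (\<alpha> i) (z ^ i)) = smul (\<alpha> j) (z ^ j) + z ^ Suc j * r" .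
  obtain b where b: "(\<Sum>i<N. smul (\<alpha> i) (z ^ i)) = z ^ Suc j * b"
    using mem by blast
  have smul_pow: "z ^ j * smul (\<alpha> j) 1 = smul (\<alpha> j) (z ^ j)"
    by (simp flip: smul_mult_right)
  have pow_Suc: "z ^ j * (z * x) = z ^ Suc j * x" for x
    by (simp add: mult.assoc[symmetric] power_commutes)
  have "z ^ j * (smul (\<alpha> j) 1 - z * (b - r))
      = z ^ j * smul (\<alpha> j) 1 + z ^ j * (z * r) - z ^ j * (z * b)"
    by (simp add: algebra_simps)
  also have "\<dots> = (smul (\<alpha> j) (z ^ j) + z ^ Suc j * r) - z ^ Suc j * b"
    by (simp only: smul_pow pow_Suc)
  also have "\<dots> = 0" by (simp only: p[symmetric] b diff_self)
  finally have "smul (\<alpha> j) 1 - z * (b - r) = 0" using mult_power_eq_0_imp_eq_0[of z, OF regular] by blast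
  then have "smul (\<alpha> j) 1 = z * (b - r)" by simp
  then have "smul (inverse (\<alpha> j)) (smul (\<alpha> j) 1) = z * smul (inverse (\<alpha> j)) (b - r)"
    by (simp add: smul_mult_right)
  then show ?thesis using j(2) by auto
qed

lemma central_unit_if_just_infinite:
  fixes z :: 'a
  assumes JI: "just_infinite smul" and nPI: "\<not> satisfies_PI smul"
    and z: "z \<in> center" "z \<noteq> 0"
  shows "\<exists>w\<in>center. z * w = 1"
proof -
  have "z \<in> range ((*) z)" by (rule range_eqI[of _ _ 1]) simp
  then obtain S where S: "finite S" "span (S \<union> range ((*) z)) = UNIV"
    using fin_codim_if_just_infinite[OF JI two_sided_ideal_range_mult[OF z(1)]] z(2)
    by (auto simp: fin_codim_def)
  have spans: "centrally_spans_mod S (range ((*) (z ^ n)))" for n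
    using centrally_spans_mod_if_span[OF subspace_two_sided_ideal[OF two_sided_ideal_range_mult[OF z(1)]] S]
    by (rule centrally_spans_mod_power[OF z(1)])
  define K where "K = (\<Inter>n. range ((*) (z ^ n)))"
  have K: "two_sided_ideal K"
    unfolding K_def by (intro two_sided_ideal_INT two_sided_ideal_range_mult center_power z(1))
  have "standard_poly (Suc (card S)) a \<in> K" for a :: "nat \<Rightarrow> 'a"
    unfolding K_def
    using standard_poly_mem_ideal[OF two_sided_ideal_range_mult[OF center_power[OF z(1)]] S(1) _ spans]
    by blast
  moreover obtain a :: "nat \<Rightarrow> 'a" where "standard_poly (Suc (card S)) a \<noteq> 0"
    using nPI satisfies_PI_if_standard_poly_eq_0 by blast
  ultimately have "fin_codim smul K" by (intro fin_codim_if_just_infinite[OF JI K])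
  then obtain T where T: "finite T" "span (T \<union> K) = UNIV" by (auto simp: fin_codim_def)
  obtain \<alpha> where
      \<alpha>: "\<exists>i<Suc (card T). \<alpha> i \<noteq> 0" "(\<Sum>i<Suc (card T). smul (\<alpha> i) (z ^ i)) \<in> K"
    by (rule family_dependent_mod_subspace[OF subspace_two_sided_ideal[OF K] T lessI])
  moreover have "\<And>y. z * y = 0 \<Longrightarrow> y = 0"
    using mult_central_eq_0_if_just_infinite[OF JI z] .
  ultimately have "\<exists>w. z * w = 1"
    unfolding K_def by (intro right_invertible_if_poly_mem_power_ideals)
  then obtain w where "z * w = 1" by blast
  then show ?thesis using center_right_inverse[OF z(1)] by blast
qed

lemma fin_dim_center_if_just_infinite:
  assumes JI: "just_infinite smul" and nPI: "\<not> satisfies_PI smul"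
    and not_simple: "\<not> simple_algebra TYPE('a)"
  shows "fin_dim smul (center :: 'a set)"
proof -
  obtain I :: "'a set" where I: "two_sided_ideal I" "I \<noteq> {0}" "I \<noteq> UNIV"
    using not_simple zero_neq_one_if_just_infinite[OF JI] unfolding simple_algebra_def by blast
  then have "fin_codim smul I" using JI unfolding just_infinite_def by blast
  have "x = 0" if "x \<in> center" "x \<in> I" for x
  proof (rule ccontr)
    assume "x \<noteq> 0"
    then obtain w where "x * w = 1"
      using central_unit_if_just_infinite[OF JI nPI \<open>x \<in> center\<close>] by blast
    then have "1 \<in> I" using two_sided_ideal_mult_right[OF I(1) \<open>x \<in> I\<close>, of w] by simp
    then show False using I(3) two_sided_ideal_UNIV_iff_one[OF I(1)] by simp
  qed
  then have "center \<inter> I \<subseteq> {0}" by blast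
  then show ?thesis
    by (rule fin_dim_if_Int_fin_codim_eq_0[OF subspace_center subspace_two_sided_ideal[OF I(1)]
          \<open>fin_codim smul I\<close>])
qed

end

theorem proposition2p3:
  fixes smul :: "'k::field \<Rightarrow> 'a::ring_1 \<Rightarrow> 'a"
  assumes "k_algebra smul"
    and "just_infinite smul"
    and "\<not> satisfies_PI smul"
    and "\<not> simple_algebra TYPE('a)"
  shows "(0::'a) \<noteq> 1 \<and> (\<forall>z\<in>(center::'a set). z \<noteq> 0 \<longrightarrow> (\<exists>w\<in>center. z * w = 1))
         \<and> fin_dim smul (center::'a set)"
proof -
  interpret algebra_over_field smul by unfold_locales (fact assms(1))
  have "\<forall>z\<in>(center::'a set). z \<noteq> 0 \<longrightarrow> (\<exists>w\<in>center. z * w = 1)"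
    using central_unit_if_just_infinite[OF assms(2,3)] by blast
  then show ?thesis
    using zero_neq_one_if_just_infinite[OF assms(2)] fin_dim_center_if_just_infinite[OF assms(2-4)]
    by simp
qed

end
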